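(* Fix $\alpha>0$. For $0<t\le1$ and $\mu\ge1$ define $$k_t(\mu)=\frac{(1+t\mu)^{2\alpha}\ln\left(1+\frac{t}{\mu}\right)+(\mu+t)^{2\alpha}\ln(1+t\mu)}{(1+t\mu)^{2\alpha}+(\mu+t)^{2\alpha}}.$$ Then for every $t\in(0,1]$, $\inf_{\mu\ge1}k_t(\mu)=\ln(1+t)$. *)

theory Defs
  imports Complex_Main
begin

definition kfun :: "real \<Rightarrow> real \<Rightarrow> real \<Rightarrow> real" where
  "kfun \<alpha> t \<mu> =
     ((1 + t * \<mu>) powr (2 * \<alpha>) * ln (1 + t / \<mu>) + (\<mu> + t) powr (2 * \<alpha>) * ln (1 + t * \<mu>))
     / ((1 + t * \<mu>) powr (2 * \<alpha>) + (\<mu> + t) powr (2 * \<alpha>))"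

end

theory Submission
  imports Defs
begin

text \<open>For \<open>\<mu> \<ge> 1\<close> the quantity \<open>k\<^sub>t(\<mu>)\<close> is a weighted mean of \<open>a = ln (1 + t/\<mu>)\<close> and
  \<open>b = ln (1 + t\<mu>)\<close> with \<open>a \<le> b\<close>, and the weight of \<open>b\<close> is the larger one because
  \<open>1 + t\<mu> \<le> \<mu> + t\<close>. Such a mean is at least the midpoint \<open>(a + b)/2\<close>, and
  \<open>(1 + t/\<mu>)(1 + t\<mu>) = 1 + t\<^sup>2 + t(\<mu> + 1/\<mu>) \<ge> (1 + t)\<^sup>2\<close> gives \<open>(a + b)/2 \<ge> ln (1 + t)\<close>.
  The bound is attained at \<open>\<mu> = 1\<close>.\<close>

lemma midpoint_le_weighted_mean:
  fixes A B a b :: real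
  assumes "0 < A" and "A \<le> B" and "a \<le> b"
  shows "(a + b) / 2 \<le> (A * a + B * b) / (A + B)"
proof -
  have "A * a + B * b = (A + B) * ((a + b) / 2) + (B - A) * (b - a) / 2"
    by (simp add: field_simps)
  moreover have "(B - A) * (b - a) \<ge> 0"
    using assms by simp
  ultimately show ?thesis
    using assms by (simp add: le_divide_eq)
qed

lemma square_one_plus_le_mult_inverse:
  fixes t \<mu> :: real
  assumes "0 \<le> t" and "0 < \<mu>"
  shows "(1 + t)\<^sup>2 \<le> (1 + t / \<mu>) * (1 + t * \<mu>)"
proof -
  have "2 \<le> \<mu> + 1 / \<mu>"
  proof -
    have "2 * \<mu> \<le> \<mu> * \<mu> + 1"
      using sum_squares_ge_zero[of "\<mu> - 1" 0] by (simp add: algebra_simps)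
    then show ?thesis
      using assms by (simp add: field_simps)
  qed
  then have "t * 2 \<le> t * (\<mu> + 1 / \<mu>)"
    using assms by (simp add: mult_left_mono)
  moreover have "(1 + t / \<mu>) * (1 + t * \<mu>) = 1 + t\<^sup>2 + t * (\<mu> + 1 / \<mu>)"
    using assms by (simp add: field_simps power2_eq_square)
  ultimately show ?thesis
    by (simp add: power2_eq_square algebra_simps)
qed

lemma ln_one_plus_le_midpoint:
  fixes t \<mu> :: real
  assumes "0 \<le> t" and "0 < \<mu>"
  shows "ln (1 + t) \<le> (ln (1 + t / \<mu>) + ln (1 + t * \<mu>)) / 2"
proof -
  have pos: "0 < 1 + t / \<mu>" "0 < 1 + t * \<mu>"
    using assms by (auto intro: add_pos_nonneg)
  have "2 * ln (1 + t) = ln ((1 + t)\<^sup>2)"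
    using assms by (simp add: ln_realpow)
  also have "\<dots> \<le> ln ((1 + t / \<mu>) * (1 + t * \<mu>))"
    using assms pos square_one_plus_le_mult_inverse by simp
  also have "\<dots> = ln (1 + t / \<mu>) + ln (1 + t * \<mu>)"
    using pos by (simp add: ln_mult)
  finally show ?thesis
    by simp
qed

lemma one_plus_mult_le_add:
  fixes t \<mu> :: real
  assumes "t \<le> 1" and "1 \<le> \<mu>"
  shows "1 + t * \<mu> \<le> \<mu> + t"
proof -
  have "(\<mu> + t) - (1 + t * \<mu>) = (\<mu> - 1) * (1 - t)"
    by (simp add: algebra_simps)
  also have "\<dots> \<ge> 0"
    using assms by simp
  finally show ?thesis
    by simp
qed

lemma kfun_ge_ln_one_plus:
  fixes \<alpha> t \<mu> :: real
  assumes "0 \<le> \<alpha>" and "0 < t" and "t \<le> 1" and "1 \<le> \<mu>"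
  shows "ln (1 + t) \<le> kfun \<alpha> t \<mu>"
proof -
  have "0 < t * \<mu>" "0 < t / \<mu>"
    using assms by simp_all
  have "t / \<mu> \<le> t"
    using assms by (simp add: divide_le_eq)
  also have "\<dots> \<le> t * \<mu>"
    using assms by simp
  finally have "ln (1 + t / \<mu>) \<le> ln (1 + t * \<mu>)"
    using \<open>0 < t / \<mu>\<close> by simp
  moreover have "(1 + t * \<mu>) powr (2 * \<alpha>) \<le> (\<mu> + t) powr (2 * \<alpha>)"
    using assms \<open>0 < t * \<mu>\<close> one_plus_mult_le_add
    by (intro powr_mono2) auto
  ultimately have "(ln (1 + t / \<mu>) + ln (1 + t * \<mu>)) / 2 \<le> kfun \<alpha> t \<mu>"
    unfolding kfun_def using \<open>0 < t * \<mu>\<close> by (intro midpoint_le_weighted_mean) auto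
  then show ?thesis
    using ln_one_plus_le_midpoint[of t \<mu>] assms by simp
qed

lemma kfun_at_one:
  fixes \<alpha> t :: real
  assumes "-1 < t"
  shows "kfun \<alpha> t 1 = ln (1 + t)"
proof -
  have "(1 + t) powr (2 * \<alpha>) > 0"
    using assms by simp
  then show ?thesis
    unfolding kfun_def by (simp add: add.commute field_simps)
qed

theorem lemma2p4:
  fixes \<alpha> t :: real
  assumes "\<alpha> > 0" and "0 < t" and "t \<le> 1"
  shows "(INF \<mu>\<in>{1..}. kfun \<alpha> t \<mu>) = ln (1 + t)"
proof (rule cInf_eq_minimum)
  show "ln (1 + t) \<in> kfun \<alpha> t ` {1..}"
    using kfun_at_one[of t \<alpha>] assms by force
  show "\<And>k. k \<in> kfun \<alpha> t ` {1..} \<Longrightarrow> ln (1 + t) \<le> k"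
    using kfun_ge_ln_one_plus assms by auto
qed

end
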